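(* $F_\tau'=F_\tau''$, i.e. the commutator subgroup $[F_\tau,F_\tau]$ is equal to its own commutator subgroup.
   Context: Let $\tau=(\sqrt5-1)/2$. $F_\tau$ is the group, under composition, of orientation-preserving homeomorphisms of $[0,1]$ that are piecewise linear with finitely many breakpoints, all breakpoints in $\mathbb{Z}[\tau]=\{a+b\tau:a,b\in\mathbb{Z}\}$ and all slopes integer powers of $\tau$. $F_\tau'=[F_\tau,F_\tau]$ and $F_\tau''=[F_\tau',F_\tau']$. *)

theory Defs
  imports Complex_Main
begin

definition tau :: real where "tau = (sqrt 5 - 1) / 2"

definition Ztau :: "real set" where
  "Ztau = {of_int a + of_int b * tau | a b. True}"

text \<open>Elements of F_tau, represented as maps real to real that are the identity
  outside [0,1] (so composition and inverse are the group operations).\<close>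
definition Ftau :: "(real \<Rightarrow> real) set" where
  "Ftau = {f. (\<forall>x. x \<notin> {0..1} \<longrightarrow> f x = x)
     \<and> continuous_on {0..1} f \<and> strict_mono_on {0..1} f \<and> f ` {0..1} = {0..1}
     \<and> (\<exists>(xs::real list) (ks::int list).
          length xs \<ge> 2 \<and> hd xs = 0 \<and> last xs = 1 \<and> sorted_wrt (<) xs
          \<and> set xs \<subseteq> Ztau \<and> length ks = length xs - 1
          \<and> (\<forall>i < length xs - 1. \<forall>x \<in> {xs!i .. xs!(i+1)}.
                f x = f (xs!i) + tau powi (ks!i) * (x - xs!i)))}"

inductive_set commutator_subgroup :: "(real \<Rightarrow> real) set \<Rightarrow> (real \<Rightarrow> real) set"
  for G :: "(real \<Rightarrow> real) set" where
  cs_id: "id \<in> commutator_subgroup G"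
| cs_comm: "f \<in> G \<Longrightarrow> g \<in> G \<Longrightarrow> f \<circ> g \<circ> inv f \<circ> inv g \<in> commutator_subgroup G"
| cs_comp: "h \<in> commutator_subgroup G \<Longrightarrow> k \<in> commutator_subgroup G \<Longrightarrow> h \<circ> k \<in> commutator_subgroup G"
| cs_inv: "h \<in> commutator_subgroup G \<Longrightarrow> inv h \<in> commutator_subgroup G"

end

theory Submission
  imports Defs
begin

text \<open>
  Every element of F_tau is linear near 0 and near 1, with slopes integer powers of tau.
  Composing with an element of an abelian subgroup of maps supported near the endpoints,
  which realise every pair of endpoint slopes, writes any f as t b with b supported in some
  interval [e, 1 - e]. For b, b' supported in [e, 1 - e] one has [b, b'] = [[b, c], [b', d]],
  where c, d in F_tau squeeze [e, 1 - e] into [0, e) and (1 - e, 1]: the conjugates of b and b'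
  by c and d then commute with b', b and with each other. A commutator [b, x] reduces to this
  case by splitting off from x an endpoint factor that commutes with b, and [t b, t' b']
  expands into conjugates of such commutators because t and t' commute.
\<close>

section \<open>Bijections, commutators and supports\<close>

lemma bij_comp_inv_id: "bij f \<Longrightarrow> f \<circ> inv f = id"
  using bij_is_surj surj_iff by blast

lemma bij_inv_comp_id: "bij f \<Longrightarrow> inv f \<circ> f = id"
  using bij_is_inj inj_iff by blast

lemma bij_comp_inv_comp: "bij f \<Longrightarrow> f \<circ> (inv f \<circ> h) = h"
  by (simp add: bij_comp_inv_id flip: comp_assoc)

lemma bij_inv_comp_comp: "bij f \<Longrightarrow> inv f \<circ> (f \<circ> h) = h"
  by (simp add: bij_inv_comp_id flip: comp_assoc)

lemmas bij_group_simps = comp_assoc bij_comp_inv_id bij_inv_comp_id bij_comp_inv_comp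
  bij_inv_comp_comp o_inv_distrib bij_comp bij_imp_bij_inv inv_inv_eq

lemma commute_comp_left: "f \<circ> g = g \<circ> f \<Longrightarrow> f \<circ> (g \<circ> h) = g \<circ> (f \<circ> h)"
  by (metis comp_assoc)

lemma commute_inv:
  assumes "f \<circ> g = g \<circ> f" "bij f"
  shows "inv f \<circ> g = g \<circ> inv f"
proof -
  have "inv f \<circ> (g \<circ> f) \<circ> inv f = inv f \<circ> (f \<circ> g) \<circ> inv f" using assms(1) by simp
  then show ?thesis using assms(2) by (simp add: bij_group_simps)
qed

lemma commute_funpow:
  assumes "f \<circ> g = g \<circ> f"
  shows "(f ^^ n) \<circ> g = g \<circ> (f ^^ n)"
proof (induction n)
  case (Suc n)
  have "(f ^^ Suc n) \<circ> g = f \<circ> ((f ^^ n) \<circ> g)" by (simp add: comp_assoc)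
  also have "\<dots> = (f \<circ> g) \<circ> (f ^^ n)" unfolding Suc by (simp add: comp_assoc)
  also have "\<dots> = g \<circ> (f ^^ Suc n)" unfolding assms by (simp add: comp_assoc)
  finally show ?case .
qed simp

lemma comp_commute_pairs:
  assumes "a \<circ> a' = a' \<circ> a" "b \<circ> b' = b' \<circ> b" "a \<circ> b' = b' \<circ> a" "b \<circ> a' = a' \<circ> b"
  shows "(a \<circ> b) \<circ> (a' \<circ> b') = (a' \<circ> b') \<circ> (a \<circ> b)"
proof -
  have "(a \<circ> b) \<circ> (a' \<circ> b') = (a \<circ> a') \<circ> (b \<circ> b')"
    by (simp add: comp_assoc commute_comp_left[OF assms(4)])
  also have "\<dots> = (a' \<circ> a) \<circ> (b' \<circ> b)" unfolding assms(1,2) ..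
  also have "\<dots> = (a' \<circ> b') \<circ> (a \<circ> b)"
    by (simp add: comp_assoc commute_comp_left[OF assms(3)])
  finally show ?thesis .
qed

lemma funpow_fixpoint: "f x = x \<Longrightarrow> (f ^^ n) x = x"
  by (induction n) auto

definition fun_powi :: "('a \<Rightarrow> 'a) \<Rightarrow> int \<Rightarrow> 'a \<Rightarrow> 'a" where
  "fun_powi f k = (if 0 \<le> k then f ^^ nat k else inv f ^^ nat (- k))"

lemma fun_powi_fixpoint:
  assumes "bij f" "f x = x"
  shows "fun_powi f k x = x"
proof -
  have "inv f x = x" using assms by (metis bij_inv_eq_iff)
  then show ?thesis using assms(2) unfolding fun_powi_def by (simp add: funpow_fixpoint)
qed

lemma commute_fun_powi:
  assumes "f \<circ> g = g \<circ> f" "bij f" "bij g"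
  shows "fun_powi f k \<circ> fun_powi g l = fun_powi g l \<circ> fun_powi f k"
proof -
  have *: "fun_powi f k \<circ> g = g \<circ> fun_powi f k" if "f \<circ> g = g \<circ> f" "bij f" for f g :: "'a \<Rightarrow> 'a" and k
    using commute_funpow[OF that(1)] commute_funpow[OF commute_inv[OF that]]
    unfolding fun_powi_def by simp
  show ?thesis using *[OF *[OF assms(1,2), symmetric] assms(3)] by simp
qed

definition comm :: "('a \<Rightarrow> 'a) \<Rightarrow> ('a \<Rightarrow> 'a) \<Rightarrow> 'a \<Rightarrow> 'a" where
  "comm f g = f \<circ> g \<circ> inv f \<circ> inv g"

lemma comm_conj:
  assumes "bij t" "bij f" "bij g"
  shows "t \<circ> comm f g \<circ> inv t = comm (t \<circ> f \<circ> inv t) (t \<circ> g \<circ> inv t)"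
  unfolding comm_def using assms by (simp add: bij_group_simps)

lemma comm_comp_left:
  assumes "bij t" "bij b" "bij g"
  shows "comm (t \<circ> b) g = (t \<circ> comm b g \<circ> inv t) \<circ> comm t g"
  unfolding comm_def using assms by (simp add: bij_group_simps)

lemma comm_swap:
  assumes "bij f" "bij g"
  shows "comm f g = inv (comm g f)"
  unfolding comm_def using assms by (simp add: bij_group_simps)

lemma comm_eq_comp_conj:
  assumes "bij b" "bij c"
  shows "comm b c = b \<circ> inv (c \<circ> b \<circ> inv c)"
  unfolding comm_def using assms by (simp add: bij_group_simps)

lemma comm_comp_right_commuting:
  assumes "bij t" "bij t'" "bij b'" "t \<circ> t' = t' \<circ> t"
  shows "comm t (t' \<circ> b') = t' \<circ> comm t b' \<circ> inv t'"
proof -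
  have inv_commute: "inv t \<circ> inv t' = inv t' \<circ> inv t"
    using assms by (metis o_inv_distrib)
  show ?thesis
    unfolding comm_def using assms
    by (simp add: bij_group_simps commute_comp_left[OF assms(4)] commute_comp_left[OF inv_commute])
qed

lemma comm_absorb_right:
  assumes "bij b" "bij x" "bij w" "w \<circ> inv b = inv b \<circ> w"
  shows "comm b (x \<circ> w) = comm b x"
  unfolding comm_def using assms by (simp add: bij_group_simps commute_comp_left[OF assms(4)])

lemma comm_comp_commuting:
  assumes "bij x" "bij y" "bij u" "bij v"
    and "y \<circ> u = u \<circ> y" "y \<circ> v = v \<circ> y" "v \<circ> x = x \<circ> v"
  shows "comm (x \<circ> y) (u \<circ> v) = comm x u"
proof -
  have inv_commute: "v \<circ> inv x = inv x \<circ> v"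
    using commute_inv[OF assms(7)[symmetric] assms(1)] by simp
  show ?thesis
    unfolding comm_def using assms
    by (simp add: bij_group_simps commute_comp_left[OF assms(5)] commute_comp_left[OF assms(6)]
        commute_comp_left[OF inv_commute])
qed

definition supp :: "('a \<Rightarrow> 'a) \<Rightarrow> 'a set" where
  "supp f = {x. f x \<noteq> x}"

lemma supp_inv:
  assumes "bij f"
  shows "supp (inv f) = supp f"
proof -
  have "inv f x = x \<longleftrightarrow> f x = x" for x using bij_inv_eq_iff[OF assms] by metis
  then show ?thesis unfolding supp_def by simp
qed

lemma supp_conj:
  assumes "bij c"
  shows "supp (c \<circ> b \<circ> inv c) = c ` supp b"
proof
  show "supp (c \<circ> b \<circ> inv c) \<subseteq> c ` supp b"
  proof
    fix x assume x: "x \<in> supp (c \<circ> b \<circ> inv c)"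
    have cx: "c (inv c x) = x" using assms by (simp add: bij_is_surj surj_f_inv_f)
    with x have "b (inv c x) \<noteq> inv c x" unfolding supp_def by auto
    then show "x \<in> c ` supp b" using cx by (intro image_eqI[where x = "inv c x"]) (simp_all add: supp_def)
  qed
  show "c ` supp b \<subseteq> supp (c \<circ> b \<circ> inv c)"
  proof
    fix x assume "x \<in> c ` supp b"
    then obtain y where y: "x = c y" "b y \<noteq> y" unfolding supp_def by auto
    moreover have "inv c x = y" using y(1) assms by (simp add: bij_is_inj)
    ultimately have "c (b (inv c x)) \<noteq> x" using assms by (simp add: bij_is_inj inj_eq)
    then show "x \<in> supp (c \<circ> b \<circ> inv c)" unfolding supp_def by simp
  qed
qed

lemma disjoint_supp_commute:
  assumes "bij f" "bij g" "supp f \<subseteq> A" "supp g \<subseteq> B" "A \<inter> B = {}"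
  shows "f \<circ> g = g \<circ> f"
proof
  fix x
  have fixed: "f y = y \<or> g y = y" for y using assms(3-5) unfolding supp_def by auto
  have "f (f y) \<noteq> f y" if "f y \<noteq> y" for y using that bij_is_inj[OF assms(1)] by (auto dest: injD)
  moreover have "g (g y) \<noteq> g y" if "g y \<noteq> y" for y using that bij_is_inj[OF assms(2)] by (auto dest: injD)
  ultimately show "(f \<circ> g) x = (g \<circ> f) x" using fixed by (cases "f x = x"; cases "g x = x") fastforce+
qed

lemma comm_in_commutator_subgroup: "f \<in> G \<Longrightarrow> g \<in> G \<Longrightarrow> comm f g \<in> commutator_subgroup G"
  unfolding comm_def by (rule cs_comm)

lemma commutator_subgroup_bij:
  assumes "\<And>g. g \<in> G \<Longrightarrow> bij g"
  shows "h \<in> commutator_subgroup G \<Longrightarrow> bij h"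
proof (induction rule: commutator_subgroup.induct)
  case cs_id
  show ?case by (rule bij_id)
next
  case (cs_comm f g)
  then show ?case using assms by (intro bij_comp bij_imp_bij_inv) auto
next
  case (cs_comp h k)
  then show ?case by (intro bij_comp)
next
  case (cs_inv h)
  show ?case using cs_inv.IH by (rule bij_imp_bij_inv)
qed

lemma commutator_subgroup_conj:
  assumes G: "\<And>g. g \<in> G \<Longrightarrow> bij g" and t: "bij t" "\<And>g. g \<in> G \<Longrightarrow> t \<circ> g \<circ> inv t \<in> G"
  shows "h \<in> commutator_subgroup G \<Longrightarrow> t \<circ> h \<circ> inv t \<in> commutator_subgroup G"
proof (induction rule: commutator_subgroup.induct)
  case cs_id
  have "t \<circ> id \<circ> inv t = id" using t(1) by (simp add: bij_comp_inv_id)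
  then show ?case by (simp only: commutator_subgroup.cs_id)
next
  case (cs_comm f g)
  have "t \<circ> comm f g \<circ> inv t \<in> commutator_subgroup G"
    unfolding comm_conj[OF t(1) G G, OF cs_comm]
    by (intro comm_in_commutator_subgroup t(2) cs_comm)
  then show ?case unfolding comm_def .
next
  case (cs_comp h k)
  have "t \<circ> (h \<circ> k) \<circ> inv t = (t \<circ> h \<circ> inv t) \<circ> (t \<circ> k \<circ> inv t)"
    using t(1) by (simp add: bij_group_simps)
  then show ?case using cs_comp.IH by (simp only: commutator_subgroup.cs_comp)
next
  case (cs_inv h)
  have "bij h" using commutator_subgroup_bij[OF G cs_inv.hyps] .
  then have "t \<circ> inv h \<circ> inv t = inv (t \<circ> h \<circ> inv t)"
    using t(1) by (simp add: bij_group_simps)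
  then show ?case using cs_inv.IH by (simp only: commutator_subgroup.cs_inv)
qed

lemma commutator_subgroup_derived_subset:
  "commutator_subgroup (commutator_subgroup G) \<subseteq> commutator_subgroup G"
proof
  fix h assume "h \<in> commutator_subgroup (commutator_subgroup G)"
  then show "h \<in> commutator_subgroup G"
  proof (induction rule: commutator_subgroup.induct)
    case (cs_comm f g)
    then show ?case by (intro commutator_subgroup.cs_comp commutator_subgroup.cs_inv)
  next
    case (cs_comp h k)
    show ?case using cs_comp.IH by (rule commutator_subgroup.cs_comp)
  next
    case (cs_inv h)
    show ?case using cs_inv.IH by (rule commutator_subgroup.cs_inv)
  qed (rule commutator_subgroup.cs_id)
qed

lemma commutator_subgroup_least:
  assumes "\<And>f g. f \<in> G \<Longrightarrow> g \<in> G \<Longrightarrow> comm f g \<in> commutator_subgroup H"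
  shows "commutator_subgroup G \<subseteq> commutator_subgroup H"
proof
  fix h assume "h \<in> commutator_subgroup G"
  then show "h \<in> commutator_subgroup H"
  proof (induction rule: commutator_subgroup.induct)
    case (cs_comm f g)
    then show ?case using assms unfolding comm_def by blast
  next
    case (cs_comp h k)
    show ?case using cs_comp.IH by (rule commutator_subgroup.cs_comp)
  next
    case (cs_inv h)
    show ?case using cs_inv.IH by (rule commutator_subgroup.cs_inv)
  qed (rule commutator_subgroup.cs_id)
qed

definition mirror :: "(real \<Rightarrow> real) \<Rightarrow> real \<Rightarrow> real" where
  "mirror f x = 1 - f (1 - x)"

lemma mirror_mirror [simp]: "mirror (mirror f) = f"
  by (simp add: mirror_def fun_eq_iff)

lemma mirror_id [simp]: "mirror id = id"
  by (simp add: mirror_def fun_eq_iff)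

lemma mirror_comp: "mirror (f \<circ> g) = mirror f \<circ> mirror g"
  by (simp add: mirror_def fun_eq_iff)

lemma mirror_funpow: "mirror (f ^^ n) = mirror f ^^ n"
  by (induction n) (simp_all only: funpow.simps mirror_comp mirror_id)

lemma mirror_inv_cancel:
  assumes "bij f"
  shows "mirror f \<circ> mirror (inv f) = id" "mirror (inv f) \<circ> mirror f = id"
  using bij_comp_inv_id[OF assms] bij_inv_comp_id[OF assms] by (simp_all flip: mirror_comp)

lemma mirror_inv: "bij f \<Longrightarrow> mirror (inv f) = inv (mirror f)"
  using mirror_inv_cancel by (metis inv_unique_comp)

lemma bij_mirror: "bij f \<Longrightarrow> bij (mirror f)"
  by (rule o_bij[OF mirror_inv_cancel(2) mirror_inv_cancel(1)])

lemma mirror_fun_powi: "bij f \<Longrightarrow> mirror (fun_powi f k) = fun_powi (mirror f) k"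
  unfolding fun_powi_def by (simp add: mirror_funpow mirror_inv)

section \<open>The golden ratio and the ring Z[tau]\<close>

lemma tau_pos: "0 < tau"
proof -
  have "1 < sqrt 5" by (rule real_less_rsqrt) simp
  then show ?thesis unfolding tau_def by simp
qed

lemma tau_ge_half: "1/2 \<le> tau"
proof -
  have "2 \<le> sqrt 5" by (rule real_le_rsqrt) simp
  then show ?thesis unfolding tau_def by simp
qed

lemma tau_less_1: "tau < 1"
proof -
  have "sqrt 5 < 3" by (rule real_less_lsqrt) simp_all
  then show ?thesis unfolding tau_def by simp
qed

lemma tau_squared: "tau\<^sup>2 = 1 - tau"
  unfolding tau_def by (simp add: power2_eq_square field_simps)

lemma inverse_tau: "inverse tau = 1 + tau"
  using tau_squared tau_pos by (simp add: power2_eq_square field_simps)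

lemma tau_powi_pos [simp]: "0 < tau powi k"
  using tau_pos by simp

lemma tau_powi_nonneg [simp]: "0 \<le> tau powi k"
  using less_imp_le[OF tau_powi_pos] .

lemma tau_powi_add: "tau powi (k + j) = tau powi k * tau powi j"
  using tau_pos by (simp add: power_int_add)

lemma tau_mult_less: "0 < r \<Longrightarrow> tau * r < r"
  using tau_less_1 by simp

lemma Ztau_of_int: "of_int a + of_int b * tau \<in> Ztau"
  unfolding Ztau_def by blast

lemma Ztau_0 [simp]: "0 \<in> Ztau" and Ztau_1 [simp]: "1 \<in> Ztau" and Ztau_tau [simp]: "tau \<in> Ztau"
  using Ztau_of_int[of 0 0] Ztau_of_int[of 1 0] Ztau_of_int[of 0 1] by simp_all

lemma Ztau_add [intro]: "x \<in> Ztau \<Longrightarrow> y \<in> Ztau \<Longrightarrow> x + y \<in> Ztau"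
proof -
  assume "x \<in> Ztau" "y \<in> Ztau"
  then obtain a b c d where "x = of_int a + of_int b * tau" "y = of_int c + of_int d * tau"
    unfolding Ztau_def by blast
  then have "x + y = of_int (a + c) + of_int (b + d) * tau" by (simp add: algebra_simps)
  then show ?thesis by (simp only: Ztau_of_int)
qed

lemma Ztau_uminus [intro]: "x \<in> Ztau \<Longrightarrow> - x \<in> Ztau"
proof -
  assume "x \<in> Ztau"
  then obtain a b where "x = of_int a + of_int b * tau" unfolding Ztau_def by blast
  then have "- x = of_int (- a) + of_int (- b) * tau" by simp
  then show ?thesis by (simp only: Ztau_of_int)
qed

lemma Ztau_diff [intro]: "x \<in> Ztau \<Longrightarrow> y \<in> Ztau \<Longrightarrow> x - y \<in> Ztau"
  using Ztau_add[of x "- y"] by auto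

lemma Ztau_mult [intro]:
  assumes "x \<in> Ztau" "y \<in> Ztau"
  shows "x * y \<in> Ztau"
proof -
  obtain a b c d where xy: "x = of_int a + of_int b * tau" "y = of_int c + of_int d * tau"
    using assms unfolding Ztau_def by blast
  have "x * y = of_int a * of_int c + (of_int a * of_int d + of_int b * of_int c) * tau
      + of_int b * of_int d * tau\<^sup>2"
    unfolding xy by (simp add: algebra_simps power2_eq_square)
  also have "\<dots> = of_int (a * c + b * d) + of_int (a * d + b * c - b * d) * tau"
    unfolding tau_squared by (simp add: algebra_simps)
  finally show ?thesis by (simp only: Ztau_of_int)
qed

lemma Ztau_power [intro]: "x \<in> Ztau \<Longrightarrow> x ^ n \<in> Ztau"
  by (induction n) auto

lemma tau_powi_Ztau [intro]: "tau powi k \<in> Ztau"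
proof (cases "0 \<le> k")
  case True
  then show ?thesis by (auto simp: power_int_def)
next
  case False
  then have "tau powi k = (1 + tau) ^ nat (- k)"
    by (simp add: power_int_def inverse_tau)
  then show ?thesis by (simp only: Ztau_power Ztau_add Ztau_1 Ztau_tau)
qed

lemma tau_squared_bounds: "tau\<^sup>2 \<in> Ztau" "0 < tau\<^sup>2" "tau\<^sup>2 \<le> 1/2"
proof -
  show "tau\<^sup>2 \<in> Ztau" by (intro Ztau_power Ztau_tau)
  show "0 < tau\<^sup>2" using tau_pos by simp
  show "tau\<^sup>2 \<le> 1/2" using tau_ge_half unfolding tau_squared by simp
qed

section \<open>Piecewise linear maps with breakpoint sets\<close>

definition adjacent :: "real set \<Rightarrow> real \<Rightarrow> real \<Rightarrow> bool" where
  "adjacent S a b \<longleftrightarrow> a \<in> S \<and> b \<in> S \<and> a < b \<and> (\<forall>s\<in>S. s \<le> a \<or> b \<le> s)"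

lemma adjacent_cover:
  assumes "finite S" "p \<in> S" "p \<le> x" "q \<in> S" "x < q"
  shows "\<exists>a b. adjacent S a b \<and> a \<le> x \<and> x < b"
proof -
  define A B where "A = {s\<in>S. s \<le> x}" and "B = {s\<in>S. x < s}"
  have A: "finite A" "A \<noteq> {}" and B: "finite B" "B \<noteq> {}"
    using assms unfolding A_def B_def by auto
  have "\<forall>s\<in>S. s \<le> Max A \<or> Min B \<le> s"
    using A B unfolding A_def B_def by (metis (mono_tags) Max_ge Min_le mem_Collect_eq not_le)
  moreover have "Max A \<in> A" "Min B \<in> B" using A B by simp_all
  ultimately show ?thesis unfolding adjacent_def A_def B_def by force
qed

lemma adjacent_refine:
  assumes "adjacent T a b" "S \<subseteq> T" "finite S" "p \<in> S" "p \<le> a" "q \<in> S" "b \<le> q"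
  shows "\<exists>p q. adjacent S p q \<and> p \<le> a \<and> b \<le> q"
proof -
  have "a < q" using assms unfolding adjacent_def by auto
  then obtain p' q' where pq: "adjacent S p' q'" "p' \<le> a" "a < q'"
    using adjacent_cover[OF assms(3,4,5,6)] by blast
  moreover have "q' \<in> T" using pq(1) assms(2) unfolding adjacent_def by auto
  ultimately have "b \<le> q'" using assms(1) unfolding adjacent_def by force
  with pq show ?thesis by blast
qed

lemma adjacent_mirror: "adjacent ((\<lambda>x. 1 - x) ` S) a b \<longleftrightarrow> adjacent S (1 - b) (1 - a)"
  unfolding adjacent_def by (force simp: image_iff)

lemma adjacent_cover_left:
  assumes "finite S" "p \<in> S" "p < x" "q \<in> S" "x \<le> q"
  shows "\<exists>a b. adjacent S a b \<and> a < x \<and> x \<le> b"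
proof -
  obtain a b where "adjacent ((\<lambda>x. 1 - x) ` S) a b" "a \<le> 1 - x" "1 - x < b"
    using adjacent_cover[of "(\<lambda>x. 1 - x) ` S" "1 - q" "1 - x" "1 - p"] assms by auto
  then show ?thesis unfolding adjacent_mirror by (intro exI[of _ "1 - b"] exI[of _ "1 - a"]) auto
qed

lemma adjacent_strict_mono_image:
  assumes "strict_mono_on A f" "S \<subseteq> A" "a \<in> S" "b \<in> S"
  shows "adjacent (f ` S) (f a) (f b) \<longleftrightarrow> adjacent S a b"
proof -
  have "\<And>x y. x \<in> S \<Longrightarrow> y \<in> S \<Longrightarrow> f x \<le> f y \<longleftrightarrow> x \<le> y"
   and "\<And>x y. x \<in> S \<Longrightarrow> y \<in> S \<Longrightarrow> f x < f y \<longleftrightarrow> x < y"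
    using strict_mono_on_less_eq[OF assms(1)] strict_mono_on_less[OF assms(1)] assms(2) by blast+
  then show ?thesis using assms(3,4) unfolding adjacent_def by auto
qed

lemma sorted_hd_le_le_last:
  assumes "sorted xs" "x \<in> set xs"
  shows "hd xs \<le> x \<and> x \<le> last xs"
proof -
  obtain i where i: "i < length xs" "x = xs ! i" using assms(2) by (auto simp: in_set_conv_nth)
  then have "xs \<noteq> []" by auto
  then show ?thesis
    using i sorted_nth_mono[OF assms(1)] by (simp add: hd_conv_nth last_conv_nth)
qed

lemma adjacent_sorted_list:
  assumes "sorted_wrt (<) xs"
  shows "adjacent (set xs) a b \<longleftrightarrow> (\<exists>i. Suc i < length xs \<and> a = xs ! i \<and> b = xs ! Suc i)"
proof -
  have mono: "strict_mono_on {..<length xs} ((!) xs)"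
    using sorted_wrt_nth_less[OF assms] by (auto intro: strict_mono_onI)
  have less: "xs ! i < xs ! j \<longleftrightarrow> i < j" and le: "xs ! i \<le> xs ! j \<longleftrightarrow> i \<le> j"
    if "i < length xs" "j < length xs" for i j
    using strict_mono_on_less[OF mono] strict_mono_on_less_eq[OF mono] that by auto
  show ?thesis
  proof
    assume "adjacent (set xs) a b"
    then obtain i j where ij: "i < length xs" "j < length xs" "a = xs ! i" "b = xs ! j" "i < j"
      and gap: "\<forall>l<length xs. xs ! l \<le> xs ! i \<or> xs ! j \<le> xs ! l"
      unfolding adjacent_def in_set_conv_nth by (auto simp: less)
    have "j = Suc i" using gap[rule_format, of "Suc i"] ij by (auto simp: le)
    with ij show "\<exists>i. Suc i < length xs \<and> a = xs ! i \<and> b = xs ! Suc i" by blast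
  next
    assume "\<exists>i. Suc i < length xs \<and> a = xs ! i \<and> b = xs ! Suc i"
    then obtain i where i: "Suc i < length xs" "a = xs ! i" "b = xs ! Suc i" by blast
    have "xs ! l \<le> a \<or> b \<le> xs ! l" if "l < length xs" for l
      using i that by (cases "l \<le> i") (auto simp: le)
    then have "\<forall>s\<in>set xs. s \<le> a \<or> b \<le> s" by (metis in_set_conv_nth)
    moreover have "a < b" using i by (simp add: less)
    ultimately show "adjacent (set xs) a b" unfolding adjacent_def using i by simp
  qed
qed

definition tau_affine_on :: "real \<Rightarrow> real \<Rightarrow> (real \<Rightarrow> real) \<Rightarrow> bool" where
  "tau_affine_on a b f \<longleftrightarrow> (\<exists>k::int. \<forall>x\<in>{a..b}. f x = f a + tau powi k * (x - a))"

lemma tau_affine_onI: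
  assumes "\<And>x. a \<le> x \<Longrightarrow> x \<le> b \<Longrightarrow> f x = f a + tau powi k * (x - a)"
  shows "tau_affine_on a b f"
  using assms unfolding tau_affine_on_def by (meson atLeastAtMost_iff)

lemma tau_affine_onE:
  assumes "tau_affine_on a b f"
  obtains k :: int where "\<And>x. a \<le> x \<Longrightarrow> x \<le> b \<Longrightarrow> f x = f a + tau powi k * (x - a)"
  using assms unfolding tau_affine_on_def by (meson atLeastAtMost_iff)

lemma tau_affine_on_less:
  assumes "tau_affine_on a b f" "a \<le> x" "x < y" "y \<le> b"
  shows "f x < f y"
proof -
  obtain k where k: "\<And>x. a \<le> x \<Longrightarrow> x \<le> b \<Longrightarrow> f x = f a + tau powi k * (x - a)"
    using tau_affine_onE[OF assms(1)] by blast
  have "f y - f x = tau powi k * (y - x)"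
    using k[of x] k[of y] assms(2-4) by (simp add: algebra_simps)
  moreover have "0 < tau powi k * (y - x)" using assms(3) by simp
  ultimately show ?thesis by simp
qed

lemma tau_affine_on_subinterval:
  assumes "tau_affine_on a b f" "a \<le> c" "d \<le> b"
  shows "tau_affine_on c d f"
proof -
  obtain k where k: "\<And>x. a \<le> x \<Longrightarrow> x \<le> b \<Longrightarrow> f x = f a + tau powi k * (x - a)"
    using tau_affine_onE[OF assms(1)] by blast
  have "f x = f c + tau powi k * (x - c)" if "c \<le> x" "x \<le> d" for x
    using k[of x] k[of c] that assms(2,3) by (simp add: algebra_simps)
  then show ?thesis by (rule tau_affine_onI)
qed

lemma tau_affine_on_comp:
  assumes g: "tau_affine_on a b g" and f: "tau_affine_on (g a) (g b) f"
  shows "tau_affine_on a b (f \<circ> g)"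
proof -
  obtain j where j: "\<And>x. a \<le> x \<Longrightarrow> x \<le> b \<Longrightarrow> g x = g a + tau powi j * (x - a)"
    using tau_affine_onE[OF g] by blast
  obtain k where k: "\<And>y. g a \<le> y \<Longrightarrow> y \<le> g b \<Longrightarrow> f y = f (g a) + tau powi k * (y - g a)"
    using tau_affine_onE[OF f] by blast
  have "(f \<circ> g) x = (f \<circ> g) a + tau powi (k + j) * (x - a)" if x: "a \<le> x" "x \<le> b" for x
  proof -
    have "g x - g a = tau powi j * (x - a)" "g b - g x = tau powi j * (b - x)"
      using j[of x] j[of b] x by (simp_all add: algebra_simps)
    moreover have "0 \<le> tau powi j * (x - a)" "0 \<le> tau powi j * (b - x)"
      using x by (simp_all add: zero_le_mult_iff)
    ultimately have "g a \<le> g x" "g x \<le> g b" by simp_all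
    then show ?thesis using k[of "g x"] j[OF x] by (simp add: tau_powi_add)
  qed
  then show ?thesis by (rule tau_affine_onI)
qed

lemma tau_affine_on_inv:
  assumes "tau_affine_on a b f" "inj f" "a \<le> b"
  shows "tau_affine_on (f a) (f b) (inv f)"
proof -
  obtain k where k: "\<And>x. a \<le> x \<Longrightarrow> x \<le> b \<Longrightarrow> f x = f a + tau powi k * (x - a)"
    using tau_affine_onE[OF assms(1)] by blast
  have "inv f y = inv f (f a) + tau powi (- k) * (y - f a)" if y: "f a \<le> y" "y \<le> f b" for y
  proof -
    define x where "x = a + (y - f a) / tau powi k"
    have "y - f a \<le> tau powi k * (b - a)" using k[of b] assms(3) y by simp
    then have "(y - f a) / tau powi k \<le> b - a" by (simp add: pos_divide_le_eq mult.commute)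
    then have "a \<le> x" "x \<le> b" using y unfolding x_def by (simp_all add: zero_le_divide_iff)
    then have "f x = y" using k[of x] tau_pos unfolding x_def by simp
    then have "inv f y = x" using assms(2) by (simp add: inv_f_eq)
    then show ?thesis
      using assms(2) unfolding x_def by (simp add: power_int_minus divide_inverse_commute)
  qed
  then show ?thesis by (rule tau_affine_onI)
qed

lemma tau_affine_on_mirror:
  assumes "tau_affine_on a b f"
  shows "tau_affine_on (1 - b) (1 - a) (mirror f)"
proof -
  obtain k where k: "\<And>x. a \<le> x \<Longrightarrow> x \<le> b \<Longrightarrow> f x = f a + tau powi k * (x - a)"
    using tau_affine_onE[OF assms(1)] by blast
  have "mirror f x = mirror f (1 - b) + tau powi k * (x - (1 - b))"
    if "1 - b \<le> x" "x \<le> 1 - a" for x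
    using k[of "1 - x"] k[of b] that unfolding mirror_def by (simp add: algebra_simps)
  then show ?thesis by (rule tau_affine_onI)
qed

text \<open>Breakpoints are kept as a finite set rather than as the sorted list in the definition
  of Ftau: sets can be refined by unions and transported along images, which is how inverses
  and composites are handled.\<close>

definition tau_pl :: "real set \<Rightarrow> (real \<Rightarrow> real) \<Rightarrow> bool" where
  "tau_pl S f \<longleftrightarrow> finite S \<and> S \<subseteq> Ztau \<inter> {0..1} \<and> 0 \<in> S \<and> 1 \<in> S
     \<and> (\<forall>a b. adjacent S a b \<longrightarrow> tau_affine_on a b f)"

lemma tau_pl_piece:
  assumes "tau_pl S f" "0 \<le> x" "x < 1"
  shows "\<exists>a b. adjacent S a b \<and> a \<le> x \<and> x < b \<and> tau_affine_on a b f"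
  using assms adjacent_cover[of S 0 x 1] unfolding tau_pl_def by blast

lemma tau_pl_piece_left:
  assumes "tau_pl S f" "0 < x" "x \<le> 1"
  shows "\<exists>a b. adjacent S a b \<and> a < x \<and> x \<le> b \<and> tau_affine_on a b f"
  using assms adjacent_cover_left[of S 0 x 1] unfolding tau_pl_def by blast

lemma tau_pl_strict_mono:
  assumes "tau_pl S f"
  shows "strict_mono_on {0..1} f"
proof -
  have fin: "finite S" using assms unfolding tau_pl_def by auto
  have "f x < f y" if "0 \<le> x" "x < y" "y \<le> 1" for x y
    using that
  proof (induction "card {s\<in>S. x < s \<and> s < y}" arbitrary: x y rule: less_induct)
    case (less x y)
    show ?case
    proof (cases "\<exists>s\<in>S. x < s \<and> s < y")
      case True
      then obtain s where s: "s \<in> S" "x < s" "s < y" by blast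
      have "card {s'\<in>S. x < s' \<and> s' < s} < card {s\<in>S. x < s \<and> s < y}"
        "card {s'\<in>S. s < s' \<and> s' < y} < card {s\<in>S. x < s \<and> s < y}"
        using s fin by (auto intro!: psubset_card_mono)
      then have "f x < f s" "f s < f y" using less s by auto
      then show ?thesis by simp
    next
      case False
      obtain a b where ab: "adjacent S a b" "a \<le> x" "x < b" "tau_affine_on a b f"
        using tau_pl_piece[OF assms, of x] less.prems by auto
      then have "y \<le> b" using False unfolding adjacent_def by force
      then show ?thesis using tau_affine_on_less[OF ab(4) ab(2)] less.prems by simp
    qed
  qed
  then show ?thesis by (auto intro: strict_mono_onI)
qed

lemma tau_pl_continuous_on:
  assumes "tau_pl S f"
  shows "continuous_on {0..1} f"
proof -
  define P where "P = {(a, b). adjacent S a b}"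
  have "finite P"
    using assms unfolding tau_pl_def P_def adjacent_def
    by (auto intro: finite_subset[of _ "S \<times> S"])
  have "{0..1} = (\<Union>(a, b)\<in>P. {a..b})"
  proof (intro equalityI subsetI)
    fix x :: real assume x: "x \<in> {0..1}"
    show "x \<in> (\<Union>(a, b)\<in>P. {a..b})"
    proof (cases "x < 1")
      case True
      then obtain a b where "adjacent S a b" "a \<le> x" "x < b"
        using tau_pl_piece[OF assms, of x] x by auto
      then show ?thesis unfolding P_def by force
    next
      case False
      then obtain a b where "adjacent S a b" "a < x" "x \<le> b"
        using tau_pl_piece_left[OF assms, of x] x by auto
      then show ?thesis unfolding P_def by force
    qed
  qed (use assms in \<open>auto simp: P_def tau_pl_def adjacent_def\<close>)
  moreover have "continuous_on (\<Union>(a, b)\<in>P. {a..b}) f"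
  proof (rule continuous_on_closed_Union[OF \<open>finite P\<close>])
    fix p assume "p \<in> P"
    then obtain a b where p: "p = (a, b)" "tau_affine_on a b f"
      using assms unfolding P_def tau_pl_def by auto
    then obtain k where k: "\<And>x. a \<le> x \<Longrightarrow> x \<le> b \<Longrightarrow> f x = f a + tau powi k * (x - a)"
      using tau_affine_onE by blast
    have "continuous_on {a..b} f \<longleftrightarrow> continuous_on {a..b} (\<lambda>x. f a + tau powi k * (x - a))"
      by (rule continuous_on_cong[OF refl]) (metis atLeastAtMost_iff k)
    then show "continuous_on (case p of (a, b) \<Rightarrow> {a..b}) f"
      using p by (auto intro!: continuous_intros)
  qed auto
  ultimately show ?thesis by simp
qed

lemma tau_pl_Ztau:
  assumes "tau_pl S f" "f 0 = 0"
  shows "x \<in> Ztau \<Longrightarrow> x \<in> {0..1} \<Longrightarrow> f x \<in> Ztau"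
proof (induction "card {s\<in>S. s < x}" arbitrary: x rule: less_induct)
  case (less x)
  have fin: "finite S" and SZ: "S \<subseteq> Ztau \<inter> {0..1}" using assms unfolding tau_pl_def by auto
  show ?case
  proof (cases "x = 0")
    case True
    then show ?thesis using assms(2) by simp
  next
    case False
    obtain a b where ab: "adjacent S a b" "a < x" "x \<le> b" "tau_affine_on a b f"
      using tau_pl_piece_left[OF assms(1), of x] less.prems False by auto
    then obtain k where k: "\<And>y. a \<le> y \<Longrightarrow> y \<le> b \<Longrightarrow> f y = f a + tau powi k * (y - a)"
      using tau_affine_onE by blast
    have fx: "f x = f a + tau powi k * (x - a)" using k[of x] ab(2,3) by simp
    have a: "a \<in> Ztau" "a \<in> {0..1}" using ab(1) SZ unfolding adjacent_def by auto
    have "card {s\<in>S. s < a} < card {s\<in>S. s < x}"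
      using ab fin unfolding adjacent_def by (auto intro!: psubset_card_mono)
    then have "f a \<in> Ztau" using less.hyps a by blast
    then show ?thesis unfolding fx using a less.prems by blast
  qed
qed

section \<open>F_tau is a group\<close>

lemma Ftau_fixes_outside: "f \<in> Ftau \<Longrightarrow> x \<notin> {0..1} \<Longrightarrow> f x = x"
  unfolding Ftau_def by blast

lemma Ftau_strict_mono: "f \<in> Ftau \<Longrightarrow> strict_mono_on {0..1} f"
  unfolding Ftau_def by blast

lemma Ftau_image: "f \<in> Ftau \<Longrightarrow> f ` {0..1} = {0..1}"
  unfolding Ftau_def by blast

lemma Ftau_maps: "f \<in> Ftau \<Longrightarrow> x \<in> {0..1} \<Longrightarrow> f x \<in> {0..1}"
  using Ftau_image by blast

lemma Ftau_0:
  assumes "f \<in> Ftau"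
  shows "f 0 = 0"
proof -
  obtain x where x: "x \<in> {0..1}" "f x = 0"
    using Ftau_image[OF assms] by (metis atLeastAtMost_iff imageE order_refl zero_le_one)
  then have "f 0 \<le> f x" using strict_mono_on_leD[OF Ftau_strict_mono[OF assms], of 0 x] by simp
  then show ?thesis using x Ftau_maps[OF assms, of 0] by simp
qed

lemma Ftau_1:
  assumes "f \<in> Ftau"
  shows "f 1 = 1"
proof -
  obtain x where x: "x \<in> {0..1}" "f x = 1"
    using Ftau_image[OF assms] by (metis atLeastAtMost_iff imageE order_refl zero_le_one)
  then have "f x \<le> f 1" using strict_mono_on_leD[OF Ftau_strict_mono[OF assms], of x 1] by simp
  then show ?thesis using x Ftau_maps[OF assms, of 1] by simp
qed

lemma Ftau_bij:
  assumes "f \<in> Ftau"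
  shows "bij f"
proof (rule bijI)
  have in01: "f x \<in> {0..1} \<longleftrightarrow> x \<in> {0..1}" for x
    using Ftau_maps[OF assms] Ftau_fixes_outside[OF assms] by metis
  show "inj f"
  proof (rule injI)
    fix x y assume eq: "f x = f y"
    show "x = y"
    proof (cases "x \<in> {0..1}")
      case True
      then have "y \<in> {0..1}" using eq in01 by metis
      then show ?thesis using True eq strict_mono_on_eqD[OF Ftau_strict_mono[OF assms]] by metis
    next
      case False
      then have "y \<notin> {0..1}" using eq in01 by metis
      then show ?thesis using False eq Ftau_fixes_outside[OF assms] by metis
    qed
  qed
  have "y \<in> range f" for y
  proof (cases "y \<in> {0..1}")
    case True
    then show ?thesis using Ftau_image[OF assms] by blast
  next
    case False
    then show ?thesis using Ftau_fixes_outside[OF assms, of y] by (metis rangeI)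
  qed
  then show "surj f" by blast
qed

lemma Ftau_supp: "f \<in> Ftau \<Longrightarrow> supp f \<subseteq> {0..1}"
  unfolding supp_def using Ftau_fixes_outside by blast

lemma Ftau_imp_tau_pl:
  assumes "f \<in> Ftau"
  shows "\<exists>S. tau_pl S f"
proof -
  have "\<exists>(xs::real list) (ks::int list).
          length xs \<ge> 2 \<and> hd xs = 0 \<and> last xs = 1 \<and> sorted_wrt (<) xs
          \<and> set xs \<subseteq> Ztau \<and> length ks = length xs - 1
          \<and> (\<forall>i < length xs - 1. \<forall>x \<in> {xs!i .. xs!(i+1)}.
                f x = f (xs!i) + tau powi (ks!i) * (x - xs!i))"
    using assms unfolding Ftau_def mem_Collect_eq by (elim conjE)
  then obtain xs :: "real list" and ks :: "int list" where
    xs: "length xs \<ge> 2" "hd xs = 0" "last xs = 1" "sorted_wrt (<) xs" "set xs \<subseteq> Ztau"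
    and pieces: "\<forall>i < length xs - 1. \<forall>x \<in> {xs!i .. xs!(i+1)}.
                   f x = f (xs!i) + tau powi (ks!i) * (x - xs!i)"
    by (elim exE conjE)
  have "xs \<noteq> []" using xs(1) by auto
  then have "0 \<in> set xs" "1 \<in> set xs" using xs(2,3) hd_in_set[of xs] last_in_set[of xs] by auto
  moreover have "set xs \<subseteq> {0..1}"
    using sorted_hd_le_le_last[OF strict_sorted_imp_sorted[OF xs(4)]] xs(2,3) by auto
  moreover have "tau_affine_on a b f" if adj: "adjacent (set xs) a b" for a b
  proof -
    obtain i where i: "Suc i < length xs" "a = xs ! i" "b = xs ! Suc i"
      using adj unfolding adjacent_sorted_list[OF xs(4)] by blast
    then have "i < length xs - 1" "b = xs ! (i + 1)" by simp_all
    then show ?thesis using pieces i(2) unfolding tau_affine_on_def by blast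
  qed
  ultimately have "tau_pl (set xs) f" unfolding tau_pl_def using xs(5) by auto
  then show ?thesis ..
qed

lemma tau_pl_breakpoint_list:
  assumes "tau_pl S f"
  shows "\<exists>(xs::real list) (ks::int list).
          length xs \<ge> 2 \<and> hd xs = 0 \<and> last xs = 1 \<and> sorted_wrt (<) xs
          \<and> set xs \<subseteq> Ztau \<and> length ks = length xs - 1
          \<and> (\<forall>i < length xs - 1. \<forall>x \<in> {xs!i .. xs!(i+1)}.
                f x = f (xs!i) + tau powi (ks!i) * (x - xs!i))"
proof -
  have S: "finite S" "S \<subseteq> Ztau \<inter> {0..1}" "0 \<in> S" "1 \<in> S"
    using assms unfolding tau_pl_def by auto
  define xs where "xs = sorted_list_of_set S"
  have xs: "set xs = S" "sorted_wrt (<) xs" using S(1) unfolding xs_def by simp_all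
  have "card {0, 1 :: real} \<le> card S" using S by (intro card_mono) auto
  then have "length xs \<ge> 2" using S(1) unfolding xs_def by simp
  moreover have "hd xs = 0" "last xs = 1"
  proof -
    have "xs \<noteq> []" using \<open>length xs \<ge> 2\<close> by auto
    then have "hd xs \<in> S" "last xs \<in> S" using xs(1) by auto
    then have "hd xs \<in> {0..1}" "last xs \<in> {0..1}" using S(2) by auto
    moreover have "hd xs \<le> 0" "1 \<le> last xs"
      using sorted_hd_le_le_last[OF strict_sorted_imp_sorted[OF xs(2)]] S(3,4) xs(1) by auto
    ultimately show "hd xs = 0" "last xs = 1" by auto
  qed
  moreover obtain kf where kf: "\<forall>i < length xs - 1.
      \<forall>x \<in> {xs!i .. xs!(i+1)}. f x = f (xs!i) + tau powi (kf i) * (x - xs!i)"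
  proof -
    have "\<exists>k. \<forall>x \<in> {xs!i .. xs!(i+1)}. f x = f (xs!i) + tau powi k * (x - xs!i)"
      if "i < length xs - 1" for i
    proof -
      have "adjacent S (xs ! i) (xs ! (i + 1))"
        unfolding xs(1)[symmetric] adjacent_sorted_list[OF xs(2)] using that by (intro exI[of _ i]) simp
      then have "tau_affine_on (xs ! i) (xs ! (i + 1)) f" using assms unfolding tau_pl_def by blast
      then show ?thesis unfolding tau_affine_on_def .
    qed
    then show ?thesis using that by metis
  qed
  define ks where "ks = map kf [0..<length xs - 1]"
  have "\<And>i. i < length xs - 1 \<Longrightarrow> ks ! i = kf i" unfolding ks_def by simp
  then have "\<forall>i < length xs - 1. \<forall>x \<in> {xs!i .. xs!(i+1)}.
      f x = f (xs!i) + tau powi (ks ! i) * (x - xs!i)"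
    using kf by metis
  moreover have "length ks = length xs - 1" unfolding ks_def by simp
  ultimately show ?thesis using xs S(2) by blast
qed

lemma tau_pl_imp_Ftau:
  assumes pl: "tau_pl S f" and outside: "\<And>x. x \<notin> {0..1} \<Longrightarrow> f x = x"
    and f01: "f 0 = 0" "f 1 = 1"
  shows "f \<in> Ftau"
proof -
  have mono: "strict_mono_on {0..1} f" by (rule tau_pl_strict_mono[OF pl])
  have cont: "continuous_on {0..1} f" by (rule tau_pl_continuous_on[OF pl])
  have "f ` {0..1} = {0..1}"
  proof
    show "f ` {0..1} \<subseteq> {0..1}"
    proof
      fix y assume "y \<in> f ` {0..1}"
      then obtain x where "x \<in> {0..1}" "y = f x" by blast
      then show "y \<in> {0..1}"
        using strict_mono_on_leD[OF mono, of 0 x] strict_mono_on_leD[OF mono, of x 1] f01 by auto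
    qed
    show "{0..1} \<subseteq> f ` {0..1}" using IVT'[of f 0 _ 1] cont f01 by fastforce
  qed
  then show ?thesis
    using outside mono cont tau_pl_breakpoint_list[OF pl] unfolding Ftau_def by blast
qed

lemma Ftau_Ztau: "f \<in> Ftau \<Longrightarrow> x \<in> Ztau \<Longrightarrow> x \<in> {0..1} \<Longrightarrow> f x \<in> Ztau"
  using Ftau_imp_tau_pl tau_pl_Ztau Ftau_0 by blast

lemma Ftau_id: "id \<in> Ftau"
proof (rule tau_pl_imp_Ftau)
  show "tau_pl {0, 1} id"
    unfolding tau_pl_def
  proof (intro conjI allI impI)
    fix a b assume "adjacent {0, 1} a b"
    then have "a = 0" "b = 1" unfolding adjacent_def by auto
    then show "tau_affine_on a b id" by (intro tau_affine_onI[where k = 0]) simp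
  qed auto
qed simp_all

lemma Ftau_inv:
  assumes f: "f \<in> Ftau"
  shows "inv f \<in> Ftau"
proof -
  obtain S where pl: "tau_pl S f" using Ftau_imp_tau_pl[OF f] by blast
  have S: "finite S" "S \<subseteq> Ztau \<inter> {0..1}" "0 \<in> S" "1 \<in> S"
    using pl unfolding tau_pl_def by auto
  have inj: "inj f" using Ftau_bij[OF f] bij_is_inj by blast
  then have inv_f: "inv f (f x) = x" for x by simp
  have "tau_pl (f ` S) (inv f)"
    unfolding tau_pl_def
  proof (intro conjI allI impI)
    show "finite (f ` S)" using S(1) by simp
    show "f ` S \<subseteq> Ztau \<inter> {0..1}" using S(2) Ftau_Ztau[OF f] Ftau_maps[OF f] by blast
    show "0 \<in> f ` S" "1 \<in> f ` S" using S(3,4) Ftau_0[OF f] Ftau_1[OF f] by (metis image_eqI)+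
    fix a' b' assume adj: "adjacent (f ` S) a' b'"
    then obtain a b where ab: "a \<in> S" "b \<in> S" "a' = f a" "b' = f b"
      unfolding adjacent_def by auto
    with adj have "adjacent S a b"
      using adjacent_strict_mono_image[OF Ftau_strict_mono[OF f]] S(2) by auto
    then have "tau_affine_on a b f" "a \<le> b" using pl unfolding tau_pl_def adjacent_def by auto
    then show "tau_affine_on a' b' (inv f)" using tau_affine_on_inv inj ab(3,4) by simp
  qed
  moreover have "inv f x = x" if "x \<notin> {0..1}" for x
    using inv_f[of x] Ftau_fixes_outside[OF f that] by simp
  moreover have "inv f 0 = 0" "inv f 1 = 1" using inv_f Ftau_0[OF f] Ftau_1[OF f] by metis+
  ultimately show ?thesis by (rule tau_pl_imp_Ftau)
qed

lemma tau_pl_comp: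
  assumes pf: "tau_pl Sf f" and pg: "tau_pl Sg g" and g: "g \<in> Ftau"
  shows "tau_pl (Sg \<union> inv g ` Sf) (f \<circ> g)"
proof -
  have Sf: "finite Sf" "Sf \<subseteq> Ztau \<inter> {0..1}" "0 \<in> Sf" "1 \<in> Sf"
    and Sg: "finite Sg" "Sg \<subseteq> Ztau \<inter> {0..1}" "0 \<in> Sg" "1 \<in> Sg"
    using pf pg unfolding tau_pl_def by auto
  define T where "T = Sg \<union> inv g ` Sf"
  have T01: "T \<subseteq> {0..1}"
    using Sf(2) Sg(2) Ftau_maps[OF Ftau_inv[OF g]] unfolding T_def by auto
  have Sf_gT: "Sf \<subseteq> g ` T"
  proof
    fix y assume "y \<in> Sf"
    then have "inv g y \<in> T" unfolding T_def by simp
    moreover have "y = g (inv g y)" using bij_is_surj[OF Ftau_bij[OF g]] by (simp add: surj_f_inv_f)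
    ultimately show "y \<in> g ` T" by blast
  qed
  show ?thesis
    unfolding tau_pl_def T_def[symmetric]
  proof (intro conjI allI impI)
    show "finite T" using Sf(1) Sg(1) unfolding T_def by simp
    show "T \<subseteq> Ztau \<inter> {0..1}"
      using Sf(2) Sg(2) T01 Ftau_Ztau[OF Ftau_inv[OF g]] unfolding T_def by blast
    show "0 \<in> T" "1 \<in> T" using Sg(3,4) unfolding T_def by auto
    fix a b assume adj: "adjacent T a b"
    then have ab: "a \<in> T" "b \<in> T" unfolding adjacent_def by auto
    have "Sg \<subseteq> T" "0 \<le> a" "b \<le> 1" using ab T01 unfolding T_def by auto
    then obtain p q where "adjacent Sg p q" "p \<le> a" "b \<le> q"
      using adjacent_refine[OF adj _ Sg(1,3) _ Sg(4)] by blast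
    then have g_aff: "tau_affine_on a b g"
      using pg tau_affine_on_subinterval unfolding tau_pl_def by blast
    have "adjacent (g ` T) (g a) (g b)"
      using adj adjacent_strict_mono_image[OF Ftau_strict_mono[OF g] T01 ab] by simp
    moreover have "0 \<le> g a" "g b \<le> 1" using ab T01 Ftau_maps[OF g] by auto
    ultimately obtain p' q' where "adjacent Sf p' q'" "p' \<le> g a" "g b \<le> q'"
      using adjacent_refine[OF _ Sf_gT Sf(1,3) _ Sf(4)] by blast
    then have "tau_affine_on (g a) (g b) f"
      using pf tau_affine_on_subinterval unfolding tau_pl_def by blast
    with g_aff show "tau_affine_on a b (f \<circ> g)" by (rule tau_affine_on_comp)
  qed
qed

lemma Ftau_comp:
  assumes f: "f \<in> Ftau" and g: "g \<in> Ftau"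
  shows "f \<circ> g \<in> Ftau"
proof -
  obtain Sf Sg where "tau_pl Sf f" "tau_pl Sg g" using Ftau_imp_tau_pl f g by blast
  then have "tau_pl (Sg \<union> inv g ` Sf) (f \<circ> g)" using g by (rule tau_pl_comp)
  moreover have "(f \<circ> g) x = x" if "x \<notin> {0..1}" for x
    using Ftau_fixes_outside[OF f that] Ftau_fixes_outside[OF g that] by simp
  moreover have "(f \<circ> g) 0 = 0" "(f \<circ> g) 1 = 1" using f g by (simp_all add: Ftau_0 Ftau_1)
  ultimately show ?thesis by (rule tau_pl_imp_Ftau)
qed

lemma Ftau_funpow: "f \<in> Ftau \<Longrightarrow> f ^^ n \<in> Ftau"
  by (induction n) (simp_all add: Ftau_id Ftau_comp)

lemma Ftau_fun_powi: "f \<in> Ftau \<Longrightarrow> fun_powi f k \<in> Ftau"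
  unfolding fun_powi_def by (simp add: Ftau_funpow Ftau_inv)

lemma Ftau_mirror:
  assumes f: "f \<in> Ftau"
  shows "mirror f \<in> Ftau"
proof -
  obtain S where pl: "tau_pl S f" using Ftau_imp_tau_pl[OF f] by blast
  have S: "finite S" "S \<subseteq> Ztau \<inter> {0..1}" "0 \<in> S" "1 \<in> S"
    using pl unfolding tau_pl_def by auto
  have "tau_pl ((\<lambda>x. 1 - x) ` S) (mirror f)"
    unfolding tau_pl_def
  proof (intro conjI allI impI)
    show "finite ((\<lambda>x. 1 - x) ` S)" using S(1) by simp
    show "(\<lambda>x. 1 - x) ` S \<subseteq> Ztau \<inter> {0..1}" using S(2) by auto
    show "0 \<in> (\<lambda>x. 1 - x) ` S" "1 \<in> (\<lambda>x. 1 - x) ` S"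
      using S(3,4) by (metis diff_self diff_zero image_eqI)+
    fix a b assume "adjacent ((\<lambda>x. 1 - x) ` S) a b"
    then have "adjacent S (1 - b) (1 - a)" by (simp add: adjacent_mirror)
    then have "tau_affine_on (1 - b) (1 - a) f" using pl unfolding tau_pl_def by blast
    then show "tau_affine_on a b (mirror f)" using tau_affine_on_mirror by fastforce
  qed
  moreover have "mirror f x = x" if "x \<notin> {0..1}" for x
  proof -
    have "1 - x \<notin> {0..1}" using that by auto
    then show ?thesis using Ftau_fixes_outside[OF f] unfolding mirror_def by simp
  qed
  moreover have "mirror f 0 = 0" "mirror f 1 = 1"
    using Ftau_0[OF f] Ftau_1[OF f] unfolding mirror_def by simp_all
  ultimately show ?thesis by (rule tau_pl_imp_Ftau)
qed

section \<open>Slopes at the endpoints\<close>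

definition slope_at_0 :: "(real \<Rightarrow> real) \<Rightarrow> real \<Rightarrow> bool" where
  "slope_at_0 f s \<longleftrightarrow> 0 < s \<and> (\<exists>e>0. \<forall>x\<in>{0..e}. f x = s * x)"

definition slope_at_1 :: "(real \<Rightarrow> real) \<Rightarrow> real \<Rightarrow> bool" where
  "slope_at_1 f s \<longleftrightarrow> slope_at_0 (mirror f) s"

lemma slope_at_0_comp:
  assumes "slope_at_0 f s" "slope_at_0 g t"
  shows "slope_at_0 (f \<circ> g) (s * t)"
proof -
  obtain e1 where e1: "e1 > 0" "\<And>x. 0 \<le> x \<Longrightarrow> x \<le> e1 \<Longrightarrow> f x = s * x" and s: "0 < s"
    using assms(1) unfolding slope_at_0_def by auto
  obtain e2 where e2: "e2 > 0" "\<And>x. 0 \<le> x \<Longrightarrow> x \<le> e2 \<Longrightarrow> g x = t * x" and t: "0 < t"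
    using assms(2) unfolding slope_at_0_def by auto
  define e where "e = min e2 (e1 / t)"
  have "(f \<circ> g) x = (s * t) * x" if "0 \<le> x" "x \<le> e" for x
  proof -
    have "g x = t * x" using e2(2) that unfolding e_def by simp
    moreover have "t * x \<le> e1" using that t unfolding e_def by (simp add: field_simps)
    ultimately show ?thesis using e1(2)[of "t * x"] that t by simp
  qed
  moreover have "e > 0" using e1 e2 t unfolding e_def by simp
  ultimately show ?thesis using s t unfolding slope_at_0_def by auto
qed

lemma slope_at_0_inv:
  assumes "slope_at_0 f s" "inj f"
  shows "slope_at_0 (inv f) (inverse s)"
proof -
  obtain e1 where e1: "e1 > 0" "\<And>x. 0 \<le> x \<Longrightarrow> x \<le> e1 \<Longrightarrow> f x = s * x" and s: "0 < s"
    using assms(1) unfolding slope_at_0_def by auto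
  have "inv f y = inverse s * y" if "0 \<le> y" "y \<le> s * e1" for y
  proof -
    have "f (inverse s * y) = y" using e1(2)[of "inverse s * y"] that s by (simp add: field_simps)
    then show ?thesis using assms(2) by (simp add: inv_f_eq)
  qed
  moreover have "s * e1 > 0" using e1 s by simp
  ultimately show ?thesis using s unfolding slope_at_0_def by auto
qed

lemma slope_at_0_funpow: "slope_at_0 f s \<Longrightarrow> slope_at_0 (f ^^ n) (s ^ n)"
proof (induction n)
  case 0
  show ?case unfolding funpow.simps slope_at_0_def by (auto intro: exI[of _ 1])
next
  case (Suc n)
  then show ?case unfolding funpow.simps power_Suc by (intro slope_at_0_comp)
qed

lemma slope_at_0_fun_powi: "slope_at_0 f s \<Longrightarrow> bij f \<Longrightarrow> slope_at_0 (fun_powi f k) (s powi k)"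
  unfolding fun_powi_def using slope_at_0_funpow slope_at_0_inv[of f s] bij_is_inj
  by (auto simp: power_int_def)

lemma slope_at_0_fixed: "e > 0 \<Longrightarrow> (\<And>x. 0 \<le> x \<Longrightarrow> x \<le> e \<Longrightarrow> f x = x) \<Longrightarrow> slope_at_0 f 1"
  unfolding slope_at_0_def by auto

lemma slope_at_1_comp: "slope_at_1 f s \<Longrightarrow> slope_at_1 g t \<Longrightarrow> slope_at_1 (f \<circ> g) (s * t)"
  unfolding slope_at_1_def mirror_comp by (rule slope_at_0_comp)

lemma slope_at_1_inv: "slope_at_1 f s \<Longrightarrow> bij f \<Longrightarrow> slope_at_1 (inv f) (inverse s)"
  unfolding slope_at_1_def by (simp add: mirror_inv slope_at_0_inv bij_mirror bij_is_inj)

lemma slope_at_1_fun_powi: "slope_at_1 f s \<Longrightarrow> bij f \<Longrightarrow> slope_at_1 (fun_powi f k) (s powi k)"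
  unfolding slope_at_1_def by (simp add: mirror_fun_powi slope_at_0_fun_powi bij_mirror)

lemma Ftau_slope_at_0:
  assumes "f \<in> Ftau"
  shows "\<exists>k. slope_at_0 f (tau powi k)"
proof -
  obtain S where pl: "tau_pl S f" using Ftau_imp_tau_pl[OF assms] by blast
  then obtain a b where ab: "adjacent S a b" "a \<le> 0" "0 < b" "tau_affine_on a b f"
    using tau_pl_piece[of S f 0] by auto
  moreover have "a = 0" using pl ab unfolding tau_pl_def adjacent_def by auto
  ultimately obtain k where "\<And>x. 0 \<le> x \<Longrightarrow> x \<le> b \<Longrightarrow> f x = f 0 + tau powi k * (x - 0)"
    using tau_affine_onE by blast
  then have "\<forall>x\<in>{0..b}. f x = tau powi k * x" using Ftau_0[OF assms] by simp
  then show ?thesis using \<open>0 < b\<close> unfolding slope_at_0_def by auto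
qed

lemma Ftau_slope_at_1: "f \<in> Ftau \<Longrightarrow> \<exists>k. slope_at_1 f (tau powi k)"
  unfolding slope_at_1_def by (rule Ftau_slope_at_0[OF Ftau_mirror])

lemma unit_slopes_imp_supp_interval:
  assumes "supp f \<subseteq> {0..1}" "slope_at_0 f 1" "slope_at_1 f 1"
  shows "\<exists>e>0. e \<le> 1/2 \<and> supp f \<subseteq> {e..1-e}"
proof -
  obtain e0 where e0: "e0 > 0" "\<And>x. 0 \<le> x \<Longrightarrow> x \<le> e0 \<Longrightarrow> f x = x"
    using assms(2) unfolding slope_at_0_def by auto
  obtain e1 where e1: "e1 > 0" "\<And>x. 0 \<le> x \<Longrightarrow> x \<le> e1 \<Longrightarrow> 1 - f (1 - x) = x"
    using assms(3) unfolding slope_at_1_def slope_at_0_def mirror_def by auto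
  define e where "e = min (1/2) (min e0 e1)"
  have "supp f \<subseteq> {e..1-e}"
  proof
    fix x assume x: "x \<in> supp f"
    then have "f x \<noteq> x" unfolding supp_def by simp
    moreover have "x \<in> {0..1}" using x assms(1) by auto
    ultimately have "\<not> x \<le> e0" "\<not> 1 - x \<le> e1" using e0(2)[of x] e1(2)[of "1 - x"] by auto
    then show "x \<in> {e..1-e}" unfolding e_def by auto
  qed
  moreover have "e > 0" "e \<le> 1/2" using e0 e1 unfolding e_def by auto
  ultimately show ?thesis by blast
qed

section \<open>Elements supported near the endpoints\<close>

text \<open>Slope tau on [0, tau r] and slope 1/tau on [tau r, r]; the two pieces meet because
  tau^2 = 1 - tau.\<close>

definition push_left :: "real \<Rightarrow> real \<Rightarrow> real" where
  "push_left r x = (if x \<le> 0 \<or> r \<le> x then x else if x \<le> tau * r then tau * x else r - (r - x) / tau)"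

lemma push_left_fixed: "x \<le> 0 \<or> r \<le> x \<Longrightarrow> push_left r x = x"
  unfolding push_left_def by simp

lemma push_left_low:
  assumes "0 < r" "0 \<le> x" "x \<le> tau * r"
  shows "push_left r x = tau * x"
  using assms tau_mult_less[OF assms(1)] unfolding push_left_def by auto

lemma push_left_high:
  assumes "0 < r" "tau * r \<le> x" "x \<le> r"
  shows "push_left r x = r - (r - x) / tau"
proof (cases "x = tau * r")
  case True
  have sq: "r - tau * r = tau * (tau * r)"
    using tau_squared by (simp add: power2_eq_square left_diff_distrib flip: mult.assoc)
  have "(r - tau * r) / tau = tau * r" unfolding sq using tau_pos by simp
  then have "r - (r - tau * r) / tau = tau * (tau * r)" using sq by simp
  moreover have "\<not> tau * r \<le> 0" "\<not> r \<le> tau * r"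
    using mult_pos_pos[OF tau_pos assms(1)] tau_mult_less[OF assms(1)] by linarith+
  ultimately show ?thesis using True unfolding push_left_def by simp
next
  case False
  then show ?thesis using assms mult_pos_pos[OF tau_pos assms(1)] unfolding push_left_def by auto
qed

lemma push_left_Ftau:
  assumes r: "r \<in> Ztau" "0 < r" "r \<le> 1"
  shows "push_left r \<in> Ftau"
proof (rule tau_pl_imp_Ftau)
  have tr: "0 < tau * r" "tau * r < r" using r tau_pos tau_mult_less by auto
  show "tau_pl {0, tau * r, r, 1} (push_left r)"
    unfolding tau_pl_def
  proof (intro conjI allI impI)
    fix a b assume adj: "adjacent {0, tau * r, r, 1} a b"
    then have "a \<in> {0, tau * r, r, 1}" "a < b" unfolding adjacent_def by auto
    then have "0 \<le> a" "a < b" using tr by fastforce+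
    moreover have "b \<le> tau * r \<or> tau * r \<le> a" "b \<le> r \<or> r \<le> a"
      using adj unfolding adjacent_def by auto
    ultimately consider "b \<le> tau * r" | "tau * r \<le> a" "b \<le> r" | "r \<le> a" by linarith
    then show "tau_affine_on a b (push_left r)"
    proof cases
      case 1
      then show ?thesis using \<open>0 \<le> a\<close> r(2)
        by (intro tau_affine_onI[where k = 1]) (simp add: push_left_low algebra_simps)
    next
      case 2
      then show ?thesis using r(2)
        by (intro tau_affine_onI[where k = "- 1"])
          (simp add: push_left_high power_int_minus divide_inverse algebra_simps)
    next
      case 3
      then show ?thesis by (intro tau_affine_onI[where k = 0]) (simp add: push_left_fixed)
    qed
  qed (use r tr in auto)
qed (use r in \<open>auto simp: push_left_fixed\<close>)

lemma bij_push_left: "r \<in> Ztau \<Longrightarrow> 0 < r \<Longrightarrow> r \<le> 1 \<Longrightarrow> bij (push_left r)"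
  using push_left_Ftau Ftau_bij by blast

lemma push_left_1_decrease:
  assumes "0 < e" "e \<le> x" "x \<le> 1 - e"
  shows "push_left 1 x \<le> x - tau\<^sup>2 * e"
proof (cases "x \<le> tau")
  case True
  then have "x - push_left 1 x = (1 - tau) * x"
    using assms push_left_low[of 1 x] by (simp add: left_diff_distrib)
  moreover have "(1 - tau) * e \<le> (1 - tau) * x" using assms tau_less_1 by (intro mult_left_mono) auto
  ultimately show ?thesis by (simp add: tau_squared)
next
  case False
  then have "x - push_left 1 x = (1 - x) * ((1 - tau) / tau)"
    using assms push_left_high[of 1 x] tau_pos by (simp add: field_simps)
  also have "(1 - tau) / tau = tau" using tau_pos tau_squared by (simp add: field_simps power2_eq_square)
  finally have "x - push_left 1 x = tau * (1 - x)" by simp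
  moreover have "tau\<^sup>2 * e \<le> tau * e"
    using tau_pos tau_less_1 assms by (simp add: power2_eq_square)
  moreover have "tau * e \<le> tau * (1 - x)" using tau_pos assms by simp
  ultimately show ?thesis by simp
qed

lemma push_left_1_iterates_below:
  assumes "0 < e"
  shows "\<exists>n. (push_left 1 ^^ n) (1 - e) < e"
proof (rule ccontr)
  assume "\<nexists>n. (push_left 1 ^^ n) (1 - e) < e"
  then have above: "e \<le> (push_left 1 ^^ n) (1 - e)" for n by (simp add: not_less)
  define d where "d = tau\<^sup>2 * e"
  have "d > 0" unfolding d_def using tau_pos assms by simp
  have "(push_left 1 ^^ n) (1 - e) \<le> 1 - e - n * d" for n
  proof (induction n)
    case (Suc n)
    let ?y = "(push_left 1 ^^ n) (1 - e)"
    have "0 \<le> n * d" using \<open>d > 0\<close> by simp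
    then have "?y \<le> 1 - e" using Suc.IH by linarith
    then have "push_left 1 ?y \<le> ?y - d"
      using push_left_1_decrease[OF assms above] unfolding d_def by blast
    then show ?case using Suc.IH by (simp add: algebra_simps)
  qed simp
  moreover obtain n :: nat where "1 / d < n" using reals_Archimedean2 by blast
  then have "1 < n * d" using \<open>d > 0\<close> by (simp add: field_simps)
  ultimately show False using above[of n] assms by (smt (verit))
qed

definition twist :: "real \<Rightarrow> int \<Rightarrow> int \<Rightarrow> real \<Rightarrow> real" where
  "twist r k m = fun_powi (push_left r) k \<circ> fun_powi (mirror (push_left r)) m"

lemma twist_Ftau: "r \<in> Ztau \<Longrightarrow> 0 < r \<Longrightarrow> r \<le> 1 \<Longrightarrow> twist r k m \<in> Ftau"
  unfolding twist_def by (intro Ftau_comp Ftau_fun_powi Ftau_mirror push_left_Ftau)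

lemma twist_fixed:
  assumes r: "r \<in> Ztau" "0 < r" "r \<le> 1" and x: "r \<le> x" "x \<le> 1 - r"
  shows "twist r k m x = x"
proof -
  have "push_left r x = x" "mirror (push_left r) x = x"
    using x push_left_fixed[of x r] push_left_fixed[of "1 - x" r] unfolding mirror_def by auto
  then have "fun_powi (push_left r) k x = x" "fun_powi (mirror (push_left r)) m x = x"
    using fun_powi_fixpoint[OF bij_push_left[OF r]] fun_powi_fixpoint[OF bij_mirror[OF bij_push_left[OF r]]]
    by simp_all
  then show ?thesis unfolding twist_def by simp
qed

lemma twist_slopes:
  assumes r: "r \<in> Ztau" "0 < r" "r < 1"
  shows "slope_at_0 (twist r k m) (tau powi k)" "slope_at_1 (twist r k m) (tau powi m)"
proof -
  let ?P = "push_left r" and ?Q = "mirror (push_left r)"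
  have bij: "bij ?P" "bij ?Q" using bij_push_left bij_mirror r by auto
  have P0: "slope_at_0 ?P tau"
    using r tau_pos push_left_low[of r] unfolding slope_at_0_def
    by (intro conjI exI[of _ "tau * r"]) auto
  have Q0: "slope_at_0 ?Q 1"
    using r push_left_fixed[of _ r] unfolding mirror_def
    by (intro slope_at_0_fixed[of "1 - r"]) auto
  have "slope_at_0 (fun_powi ?P k \<circ> fun_powi ?Q m) (tau powi k * 1 powi m)"
    using slope_at_0_fun_powi[OF P0 bij(1)] slope_at_0_fun_powi[OF Q0 bij(2)] by (rule slope_at_0_comp)
  then show "slope_at_0 (twist r k m) (tau powi k)" unfolding twist_def by simp
  have "slope_at_1 ?P 1" "slope_at_1 ?Q tau" using P0 Q0 unfolding slope_at_1_def by simp_all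
  then have "slope_at_1 (fun_powi ?P k \<circ> fun_powi ?Q m) (1 powi k * tau powi m)"
    using slope_at_1_fun_powi bij by (blast intro: slope_at_1_comp)
  then show "slope_at_1 (twist r k m) (tau powi m)" unfolding twist_def by simp
qed

lemma twist_commute:
  assumes r: "r \<in> Ztau" "0 < r" "r \<le> 1/2"
  shows "twist r k m \<circ> twist r k' m' = twist r k' m' \<circ> twist r k m"
proof -
  let ?P = "push_left r" and ?Q = "mirror (push_left r)"
  have bij: "bij ?P" "bij ?Q" using bij_push_left bij_mirror r by auto
  have moved: "0 < x \<and> x < r" if "push_left r x \<noteq> x" for x
    using that push_left_fixed[of x r] by force
  then have "supp ?P \<subseteq> {0<..<r}" unfolding supp_def by auto
  moreover have "supp ?Q \<subseteq> {1-r<..<1}"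
  proof
    fix x assume "x \<in> supp ?Q"
    then have "push_left r (1 - x) \<noteq> 1 - x" unfolding supp_def mirror_def by auto
    then show "x \<in> {1-r<..<1}" using moved[of "1 - x"] by auto
  qed
  ultimately have PQ: "?P \<circ> ?Q = ?Q \<circ> ?P" using r by (intro disjoint_supp_commute bij) auto
  show ?thesis
    unfolding twist_def
  proof (rule comp_commute_pairs)
    show "fun_powi ?P k \<circ> fun_powi ?P k' = fun_powi ?P k' \<circ> fun_powi ?P k"
      by (rule commute_fun_powi[OF refl bij(1) bij(1)])
    show "fun_powi ?Q m \<circ> fun_powi ?Q m' = fun_powi ?Q m' \<circ> fun_powi ?Q m"
      by (rule commute_fun_powi[OF refl bij(2) bij(2)])
    show "fun_powi ?P k \<circ> fun_powi ?Q m' = fun_powi ?Q m' \<circ> fun_powi ?P k"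
      by (rule commute_fun_powi[OF PQ bij])
    show "fun_powi ?Q m \<circ> fun_powi ?P k' = fun_powi ?P k' \<circ> fun_powi ?Q m"
      by (rule commute_fun_powi[OF PQ[symmetric] bij(2,1)])
  qed
qed

lemma derived_Ftau_conj:
  assumes "t \<in> Ftau" "h \<in> commutator_subgroup (commutator_subgroup Ftau)"
  shows "t \<circ> h \<circ> inv t \<in> commutator_subgroup (commutator_subgroup Ftau)"
proof -
  have Ftau_conj: "t \<circ> g \<circ> inv t \<in> Ftau" if "g \<in> Ftau" for g
    using assms(1) that by (intro Ftau_comp Ftau_inv)
  have C_bij: "g \<in> commutator_subgroup Ftau \<Longrightarrow> bij g" for g
    using commutator_subgroup_bij Ftau_bij by blast
  have "t \<circ> g \<circ> inv t \<in> commutator_subgroup Ftau" if "g \<in> commutator_subgroup Ftau" for g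
    using commutator_subgroup_conj[OF Ftau_bij Ftau_bij[OF assms(1)] Ftau_conj that] .
  then show ?thesis
    using commutator_subgroup_conj[OF C_bij Ftau_bij[OF assms(1)]] assms(2) by blast
qed

lemma Ftau_squeeze:
  assumes "0 < e"
  shows "\<exists>c\<in>Ftau. \<forall>x\<in>{e..1-e}. 0 \<le> c x \<and> c x < e"
proof -
  obtain n where n: "(push_left 1 ^^ n) (1 - e) < e" using push_left_1_iterates_below[OF assms] by blast
  let ?c = "push_left 1 ^^ n"
  have c: "?c \<in> Ftau" using push_left_Ftau[of 1] by (simp add: Ftau_funpow)
  have "0 \<le> ?c x \<and> ?c x < e" if "x \<in> {e..1-e}" for x
  proof -
    have x: "x \<in> {0..1}" "1 - e \<in> {0..1}" "x \<le> 1 - e" using that assms by auto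
    then have "?c x \<le> ?c (1 - e)" using strict_mono_on_leD[OF Ftau_strict_mono[OF c]] by blast
    then show ?thesis using n Ftau_maps[OF c x(1)] by auto
  qed
  with c show ?thesis by blast
qed

lemma comm_interior_supported_in_derived:
  assumes b: "b \<in> Ftau" "supp b \<subseteq> {e..1-e}" and b': "b' \<in> Ftau" "supp b' \<subseteq> {e..1-e}"
    and e: "0 < e" "e \<le> 1/2"
  shows "comm b b' \<in> commutator_subgroup (commutator_subgroup Ftau)"
proof -
  obtain c where c: "c \<in> Ftau" "\<And>x. x \<in> {e..1-e} \<Longrightarrow> 0 \<le> c x \<and> c x < e"
    using Ftau_squeeze[OF e(1)] by blast
  define d where "d = mirror c"
  have d: "d \<in> Ftau" "\<And>x. x \<in> {e..1-e} \<Longrightarrow> 1 - e < d x \<and> d x \<le> 1"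
    using Ftau_mirror[OF c(1)] c(2)[of "1 - _"] unfolding d_def mirror_def by force+
  have bij: "bij b" "bij b'" "bij c" "bij d" using b b' c d Ftau_bij by auto
  define a where "a = c \<circ> b \<circ> inv c"
  define a' where "a' = d \<circ> b' \<circ> inv d"
  have "bij a" "bij a'" unfolding a_def a'_def using bij by (simp_all add: bij_group_simps)
  then have bij_a: "bij (inv a)" "bij (inv a')" by (simp_all add: bij_imp_bij_inv)
  have "supp (inv a) = supp a" by (rule supp_inv[OF \<open>bij a\<close>])
  also have "\<dots> = c ` supp b" unfolding a_def by (rule supp_conj[OF bij(3)])
  finally have supp_a: "supp (inv a) \<subseteq> {0..<e}" using b(2) c(2) by auto
  have "supp (inv a') = supp a'" by (rule supp_inv[OF \<open>bij a'\<close>])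
  also have "\<dots> = d ` supp b'" unfolding a'_def by (rule supp_conj[OF bij(4)])
  finally have supp_a': "supp (inv a') \<subseteq> {1-e<..1}" using b'(2) d(2) by auto
  \<comment> \<open>a and a' live in [0, e) and (1 - e, 1], away from each other and from b', b\<close>
  have "comm b b' = comm (b \<circ> inv a) (b' \<circ> inv a')"
  proof (rule comm_comp_commuting[symmetric])
    show "inv a \<circ> b' = b' \<circ> inv a"
      using supp_a b'(2) by (intro disjoint_supp_commute[of _ _ "{0..<e}" "{e..1-e}"] bij_a bij) auto
    show "inv a \<circ> inv a' = inv a' \<circ> inv a"
      using supp_a supp_a' e by (intro disjoint_supp_commute[of _ _ "{0..<e}" "{1-e<..1}"] bij_a) auto
    show "inv a' \<circ> b = b \<circ> inv a'"
      using supp_a' b(2) by (intro disjoint_supp_commute[of _ _ "{1-e<..1}" "{e..1-e}"] bij_a bij) auto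
  qed (use bij bij_a in auto)
  also have "\<dots> = comm (comm b c) (comm b' d)"
    unfolding a_def a'_def using bij by (simp add: comm_eq_comp_conj)
  finally show ?thesis
    using b(1) b'(1) c(1) d(1) by (simp add: comm_in_commutator_subgroup)
qed

lemma Ztau_small:
  assumes "0 < e"
  shows "\<exists>r\<in>Ztau. 0 < r \<and> r \<le> 1/2 \<and> r < e"
proof -
  obtain n where n: "tau ^ n < e" using real_arch_pow_inv[OF assms tau_less_1] by blast
  have "tau ^ (n + 2) \<le> tau ^ n" "tau ^ (n + 2) \<le> tau\<^sup>2"
    using tau_pos tau_less_1 by (intro power_decreasing; simp)+
  moreover have "tau ^ (n + 2) \<in> Ztau" by (rule Ztau_power[OF Ztau_tau])
  moreover have "0 < tau ^ (n + 2)" using tau_pos by simp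
  ultimately show ?thesis using n tau_squared_bounds(3) by force
qed

lemma Ftau_twist_decomposition:
  assumes f: "f \<in> Ftau" and r: "r \<in> Ztau" "0 < r" "r \<le> 1/2"
  obtains k m b e where "b \<in> Ftau" "f = twist r k m \<circ> b"
    "0 < e" "e \<le> 1/2" "supp b \<subseteq> {e..1-e}"
proof -
  obtain k m where "slope_at_0 f (tau powi k)" "slope_at_1 f (tau powi m)"
    using Ftau_slope_at_0[OF f] Ftau_slope_at_1[OF f] by blast
  define t where "t = twist r k m"
  have t: "t \<in> Ftau" "bij t" unfolding t_def using twist_Ftau r Ftau_bij by auto
  have "slope_at_0 (inv t) (inverse (tau powi k))" "slope_at_1 (inv t) (inverse (tau powi m))"
    using twist_slopes[OF r(1,2)] r(3) t(2) unfolding t_def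
    by (auto intro: slope_at_0_inv slope_at_1_inv bij_is_inj)
  then have "slope_at_0 (inv t \<circ> f) (inverse (tau powi k) * tau powi k)"
    "slope_at_1 (inv t \<circ> f) (inverse (tau powi m) * tau powi m)"
    using slope_at_0_comp slope_at_1_comp \<open>slope_at_0 f _\<close> \<open>slope_at_1 f _\<close> by blast+
  moreover have "inverse (tau powi j) * tau powi j = 1" for j
    using tau_powi_pos[of j] by (intro left_inverse) linarith
  ultimately have "slope_at_0 (inv t \<circ> f) 1" "slope_at_1 (inv t \<circ> f) 1" by simp_all
  moreover have b: "inv t \<circ> f \<in> Ftau" using t f by (intro Ftau_comp Ftau_inv)
  ultimately obtain e where "0 < e" "e \<le> 1/2" "supp (inv t \<circ> f) \<subseteq> {e..1-e}"
    using unit_slopes_imp_supp_interval[OF Ftau_supp] by blast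
  moreover have "f = t \<circ> (inv t \<circ> f)" using t(2) by (simp add: bij_comp_inv_comp)
  ultimately show ?thesis using that b unfolding t_def by blast
qed

lemma comm_interior_supported_Ftau_in_derived:
  assumes b: "b \<in> Ftau" "supp b \<subseteq> {e..1-e}" and e: "0 < e" "e \<le> 1/2" and x: "x \<in> Ftau"
  shows "comm b x \<in> commutator_subgroup (commutator_subgroup Ftau)"
proof -
  obtain r where r: "r \<in> Ztau" "0 < r" "r \<le> 1/2" "r < e" using Ztau_small[OF e(1)] by blast
  obtain k m s e' where s: "s \<in> Ftau" "inv x = twist r k m \<circ> s"
    "0 < e'" "e' \<le> 1/2" "supp s \<subseteq> {e'..1-e'}"
    by (rule Ftau_twist_decomposition[OF Ftau_inv[OF x] r(1-3)])
  define t where "t = twist r k m"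
  have bij: "bij b" "bij x" "bij s" "bij t"
    using b(1) x s(1) twist_Ftau[OF r(1,2)] r(3) Ftau_bij unfolding t_def by auto
  have "x = inv (inv x)" using bij(2) by (simp add: inv_inv_eq)
  also have "\<dots> = inv s \<circ> inv t" unfolding s(2) t_def[symmetric] using bij(4,3) by (rule o_inv_distrib)
  finally have x_eq: "x = inv s \<circ> inv t" .
  have "supp t \<subseteq> - {r..1-r}" using twist_fixed[OF r(1,2)] r(3) unfolding t_def supp_def by auto
  then have "supp (inv t) \<subseteq> - {r..1-r}" using supp_inv[OF bij(4)] by simp
  moreover have "supp (inv b) \<subseteq> {e..1-e}" using supp_inv[OF bij(1)] b(2) by simp
  ultimately have "inv t \<circ> inv b = inv b \<circ> inv t"
    using r(4) bij by (intro disjoint_supp_commute bij_imp_bij_inv) auto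
  then have "comm b x = comm b (inv s)"
    unfolding x_eq using bij by (intro comm_absorb_right bij_imp_bij_inv)
  moreover have "comm b (inv s) \<in> commutator_subgroup (commutator_subgroup Ftau)"
  proof (rule comm_interior_supported_in_derived[where e = "min e e'"])
    show "supp b \<subseteq> {min e e'..1 - min e e'}" using b(2) by (rule order.trans) auto
    show "supp (inv s) \<subseteq> {min e e'..1 - min e e'}"
      unfolding supp_inv[OF bij(3)] using s(5) by (rule order.trans) auto
  qed (use b(1) Ftau_inv[OF s(1)] e s(3) in auto)
  ultimately show ?thesis by simp
qed

lemma comm_Ftau_in_derived:
  assumes f: "f \<in> Ftau" and g: "g \<in> Ftau"
  shows "comm f g \<in> commutator_subgroup (commutator_subgroup Ftau)"
proof -
  obtain k m b e where b: "b \<in> Ftau" "f = twist (tau\<^sup>2) k m \<circ> b"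
    "0 < e" "e \<le> 1/2" "supp b \<subseteq> {e..1-e}"
    by (rule Ftau_twist_decomposition[OF f tau_squared_bounds])
  obtain k' m' b' e' where b': "b' \<in> Ftau" "g = twist (tau\<^sup>2) k' m' \<circ> b'"
    "0 < e'" "e' \<le> 1/2" "supp b' \<subseteq> {e'..1-e'}"
    by (rule Ftau_twist_decomposition[OF g tau_squared_bounds])
  define t t' where "t = twist (tau\<^sup>2) k m" and "t' = twist (tau\<^sup>2) k' m'"
  have t: "t \<in> Ftau" "t' \<in> Ftau" unfolding t_def t'_def using twist_Ftau tau_squared_bounds by auto
  have bij: "bij t" "bij t'" "bij b" "bij b'" "bij g" using t b b' g Ftau_bij by auto
  have "comm f g = (t \<circ> comm b g \<circ> inv t) \<circ> comm t g"
    unfolding b(2) t_def[symmetric] by (rule comm_comp_left[OF bij(1,3,5)])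
  also have "comm t g = t' \<circ> comm t b' \<circ> inv t'"
    unfolding b'(2) t'_def[symmetric]
    by (rule comm_comp_right_commuting[OF bij(1,2,4)])
      (unfold t_def t'_def, rule twist_commute[OF tau_squared_bounds])
  also have "comm t b' = inv (comm b' t)" by (rule comm_swap[OF bij(1,4)])
  finally have eq: "comm f g = (t \<circ> comm b g \<circ> inv t) \<circ> (t' \<circ> inv (comm b' t) \<circ> inv t')" .
  have "comm b g \<in> commutator_subgroup (commutator_subgroup Ftau)"
    by (rule comm_interior_supported_Ftau_in_derived[OF b(1,5,3,4) g])
  moreover have "comm b' t \<in> commutator_subgroup (commutator_subgroup Ftau)"
    by (rule comm_interior_supported_Ftau_in_derived[OF b'(1,5,3,4) t(1)])
  ultimately show ?thesis
    unfolding eq by (intro commutator_subgroup.cs_comp commutator_subgroup.cs_inv derived_Ftau_conj t)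
qed

theorem mainTheorem17:
  shows "commutator_subgroup (commutator_subgroup Ftau) = commutator_subgroup Ftau"
proof (rule antisym)
  show "commutator_subgroup (commutator_subgroup Ftau) \<subseteq> commutator_subgroup Ftau"
    by (rule commutator_subgroup_derived_subset)
  show "commutator_subgroup Ftau \<subseteq> commutator_subgroup (commutator_subgroup Ftau)"
    by (rule commutator_subgroup_least) (rule comm_Ftau_in_derived)
qed

end
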